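(* Suppose Algorithm MC is run on $b$ with $|b_j(v)|\le\deg(v)$ for all $v,j$, with $\alpha\in(0,1/4]$ and $T$ satisfying $\alpha^2T\ge\ln(2nk+5Tkn^2)$, and completes all $T$ rounds without terminating in step (4). Then $|b_j(v)-(B\bar f_j)_v|\le5\alpha\deg(v)$ for all $v\in V$ and $j\in[k]$.
   Context: Let $G=(V,E)$ be a unit-capacity undirected graph, $n=|V|\ge3$, every vertex of degree $\deg(v)\ge1$, each edge with a fixed arbitrary orientation; $B\in\mathbb R^{V\times E}$ is the incidence matrix (column $(u,v)$ has $+1$ in row $u$, $-1$ in row $v$, $0$ elsewhere). Algorithm MC takes $k\ge1$, $b=(b_1,\dots,b_k)\in\mathbb R^{V\times[k]}$ with $|b_j(v)|\le\deg(v)$ for all $v,j$, $\alpha\in(0,1/4]$ and an integer $T\ge1$. Set $w^1_{v,j,+}=w^1_{v,j,-}=1$. For $i=1,\dots,T$: (1) $\tilde w^i_{v,j,\circ}=w^i_{v,j,\circ}$ if $w^i_{v,j,\circ}\ge n$ and $0$ otherwise ($\circ\in\{+,-\}$); (2) $\tilde\phi^i_{v,j}=(\tilde w^i_{v,j,+}-\tilde w^i_{v,j,-})/\deg(v)$; (3) for each edge $(u,v)$ let $j^*$ maximize $|\tilde\phi^i_{u,j}-\tilde\phi^i_{v,j}|$ over $j\in[k]$ (ties arbitrary), set $f^i_{j^*}(u,v)=+1$ if $\tilde\phi^i_{u,j^*}>\tilde\phi^i_{v,j^*}$, $-1$ if $<$, $0$ otherwise, and $f^i_j(u,v)=0$ for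 $j\ne j^*$; (4) if $\sum_{j,v}\tilde\phi^i_{v,j}b_j(v)>\sum_{j,v}\tilde\phi^i_{v,j}(Bf^i_j)_v$, terminate (declaring infeasibility); (5) $r^i_{v,j}=(b_j(v)-(Bf^i_j)_v)/\deg(v)$; (6) $w^{i+1}_{v,j,+}=w^i_{v,j,+}(1+\alpha r^i_{v,j})$, $w^{i+1}_{v,j,-}=w^i_{v,j,-}(1-\alpha r^i_{v,j})$. If all $T$ rounds complete, output $\bar f_j=\frac1T\sum_{i=1}^Tf^i_j$ for each $j$. *)

theory Defs
  imports Complex_Main
begin

type_synonym 'a mcw = "('a \<Rightarrow> nat \<Rightarrow> real) \<times> ('a \<Rightarrow> nat \<Rightarrow> real)"

definition deg :: "('a \<times> 'a) set \<Rightarrow> 'a \<Rightarrow> nat" where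
  "deg E v = card {e \<in> E. fst e = v \<or> snd e = v}"

text \<open>(B f)_v for the incidence matrix B: column (u,w) has +1 at u, -1 at w.\<close>
definition incB :: "('a \<times> 'a) set \<Rightarrow> (('a \<times> 'a) \<Rightarrow> real) \<Rightarrow> 'a \<Rightarrow> real" where
  "incB E f v = (\<Sum>e\<in>E. (if fst e = v then f e else 0) - (if snd e = v then f e else 0))"

definition trunc :: "nat \<Rightarrow> real \<Rightarrow> real" where
  "trunc n x = (if real n \<le> x then x else 0)"

definition mc_phi :: "nat \<Rightarrow> ('a \<times> 'a) set \<Rightarrow> 'a mcw \<Rightarrow> 'a \<Rightarrow> nat \<Rightarrow> real" where
  "mc_phi n E w v j = (trunc n (fst w v j) - trunc n (snd w v j)) / real (deg E v)"

definition mc_flow :: "(('a \<times> 'a) \<Rightarrow> nat) \<Rightarrow> ('a \<Rightarrow> nat \<Rightarrow> real) \<Rightarrow> nat \<Rightarrow> ('a \<times> 'a) \<Rightarrow> real" where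
  "mc_flow s phi j e = (if j = s e then sgn (phi (fst e) j - phi (snd e) j) else 0)"

text \<open>Weights of Algorithm MC: mc_w ... i are the weights w^{i+1} (round i+1 of the paper);
  sel i is the tie-breaking choice j* used in paper round i+1.\<close>
fun mc_w :: "'a set \<Rightarrow> ('a \<times> 'a) set \<Rightarrow> ('a \<Rightarrow> nat \<Rightarrow> real) \<Rightarrow> real
    \<Rightarrow> (nat \<Rightarrow> ('a \<times> 'a) \<Rightarrow> nat) \<Rightarrow> nat \<Rightarrow> 'a mcw" where
  "mc_w V E b \<alpha> sel 0 = (\<lambda>v j. 1, \<lambda>v j. 1)"
| "mc_w V E b \<alpha> sel (Suc i) =
     (let w = mc_w V E b \<alpha> sel i;
          \<phi> = mc_phi (card V) E w;
          r = (\<lambda>v j. (b v j - incB E (mc_flow (sel i) \<phi> j) v) / real (deg E v))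
      in (\<lambda>v j. fst w v j * (1 + \<alpha> * r v j), \<lambda>v j. snd w v j * (1 - \<alpha> * r v j)))"

definition mc_phiR :: "'a set \<Rightarrow> ('a \<times> 'a) set \<Rightarrow> ('a \<Rightarrow> nat \<Rightarrow> real) \<Rightarrow> real
    \<Rightarrow> (nat \<Rightarrow> ('a \<times> 'a) \<Rightarrow> nat) \<Rightarrow> nat \<Rightarrow> 'a \<Rightarrow> nat \<Rightarrow> real" where
  "mc_phiR V E b \<alpha> sel i = mc_phi (card V) E (mc_w V E b \<alpha> sel i)"

definition mc_fR :: "'a set \<Rightarrow> ('a \<times> 'a) set \<Rightarrow> ('a \<Rightarrow> nat \<Rightarrow> real) \<Rightarrow> real
    \<Rightarrow> (nat \<Rightarrow> ('a \<times> 'a) \<Rightarrow> nat) \<Rightarrow> nat \<Rightarrow> nat \<Rightarrow> ('a \<times> 'a) \<Rightarrow> real" where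
  "mc_fR V E b \<alpha> sel i j = mc_flow (sel i) (mc_phiR V E b \<alpha> sel i) j"

end

theory Submission
  imports Defs
begin

text \<open>
  Write \<open>r\<^sup>i(v,j) = (b\<^sub>j(v) - (B f\<^sup>i\<^sub>j)\<^sub>v) / deg v\<close>. The weight \<open>w\<^sup>T\<^sub>\<plusminus>(v,j)\<close> is the product of
  the factors \<open>1 \<plusminus> \<alpha> r\<^sup>i(v,j)\<close>, where \<open>\<bar>r\<^sup>i(v,j)\<bar> \<le> 2\<close>, so \<open>ln (1 + x) \<ge> x - x\<^sup>2\<close> for
  \<open>\<bar>x\<bar> \<le> 1/2\<close> gives \<open>ln w\<^sup>T\<^sub>\<plusminus>(v,j) \<ge> \<plusminus>\<alpha> \<Sum>\<^sub>i r\<^sup>i(v,j) - 4\<alpha>\<^sup>2T\<close>.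
  On the other hand, in one round the potential \<open>\<Sum>\<^sub>v\<^sub>,\<^sub>j (w\<^sub>+ + w\<^sub>-)\<close> grows by
  \<open>\<alpha> \<Sum>\<^sub>v\<^sub>,\<^sub>j \<phi>(v,j) (b\<^sub>j(v) - (B f\<^sub>j)\<^sub>v)\<close>, which is nonpositive because the algorithm did not
  terminate, plus a truncation error of at most \<open>2\<alpha>kn\<^sup>2\<close>. So every weight is at most
  \<open>2nk + 5Tkn\<^sup>2 \<le> exp (\<alpha>\<^sup>2T)\<close>, whence \<open>\<bar>\<Sum>\<^sub>i r\<^sup>i(v,j)\<bar> \<le> 5\<alpha>T\<close>, and this sum is
  \<open>T (b\<^sub>j(v) - (B f\<^sub>j)\<^sub>v) / deg v\<close> for the averaged flow.
\<close>

lemma ln_add_one_ge_nonpos: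
  fixes x :: real
  assumes "-(1/2) \<le> x" "x \<le> 0"
  shows "x - x^2 \<le> ln (1 + x)"
proof -
  let ?g = "\<lambda>t::real. ln (1 + t) - t + t^2"
  have "?g 0 \<le> ?g x"
  proof (rule DERIV_nonpos_imp_nonincreasing[OF assms(2)])
    fix t :: real
    assume t: "x \<le> t" "t \<le> 0"
    have pos: "1 + t > 0"
      using t assms by linarith
    have "DERIV ?g t :> 1 / (1 + t) - 1 + 2 * t"
      by (auto intro!: derivative_eq_intros simp: pos)
    moreover have "1 / (1 + t) - 1 + 2 * t = t * (1 + 2 * t) / (1 + t)"
      using pos by (simp add: field_simps)
    moreover have "t * (1 + 2 * t) \<le> 0"
      using t assms by (intro mult_nonpos_nonneg) auto
    ultimately show "\<exists>y. DERIV ?g t :> y \<and> y \<le> 0"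
      using pos by (metis divide_nonpos_pos)
  qed
  then show ?thesis
    by simp
qed

lemma ln_add_one_ge:
  fixes x :: real
  assumes "\<bar>x\<bar> \<le> 1/2"
  shows "x - x^2 \<le> ln (1 + x)"
  using assms ln_one_plus_pos_lower_bound[of x] ln_add_one_ge_nonpos[of x]
  by (cases "0 \<le> x") auto

lemma ln_prod_add_one_ge:
  fixes x :: "'i \<Rightarrow> real"
  assumes "finite I" and "\<And>i. i \<in> I \<Longrightarrow> \<bar>x i\<bar> \<le> 1/2"
  shows "(\<Sum>i\<in>I. x i - (x i)^2) \<le> ln (\<Prod>i\<in>I. 1 + x i)"
proof -
  have "(\<Sum>i\<in>I. x i - (x i)^2) \<le> (\<Sum>i\<in>I. ln (1 + x i))"
    using assms(2) by (intro sum_mono ln_add_one_ge)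
  also have "\<dots> = ln (\<Prod>i\<in>I. 1 + x i)"
  proof (rule ln_prod[symmetric, OF assms(1)])
    show "1 + x i \<noteq> 0" if "i \<in> I" for i
      using assms(2)[OF that] by linarith
  qed
  finally show ?thesis .
qed

lemma incB_eq_sum_mult:
  "incB E f v = (\<Sum>e\<in>E. ((if fst e = v then 1 else 0) - (if snd e = v then 1 else 0)) * f e)"
  unfolding incB_def by (intro sum.cong) auto

lemma incB_abs_le:
  assumes "finite E" and "\<And>e. \<bar>f e\<bar> \<le> 1"
  shows "\<bar>incB E f v\<bar> \<le> real (deg E v)"
proof -
  have "\<bar>incB E f v\<bar> \<le> (\<Sum>e\<in>E. \<bar>((if fst e = v then 1 else 0) - (if snd e = v then 1 else 0)) * f e\<bar>)"
    unfolding incB_eq_sum_mult by (rule sum_abs)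
  also have "\<dots> \<le> (\<Sum>e\<in>E. if fst e = v \<or> snd e = v then 1 else 0)"
    using assms(2) by (intro sum_mono) (auto simp: abs_mult)
  also have "\<dots> = real (deg E v)"
    using assms(1) by (simp add: sum.inter_filter[symmetric] deg_def)
  finally show ?thesis .
qed

lemma incB_scaled_sum:
  "incB E (\<lambda>e. c * (\<Sum>i\<in>I. f i e)) v = c * (\<Sum>i\<in>I. incB E (f i) v)"
  unfolding incB_eq_sum_mult
  by (simp add: sum_distrib_left mult.left_commute sum.swap[of _ I])

lemma trunc_update_le:
  fixes f s r \<alpha> :: real
  assumes "0 \<le> f" "0 \<le> s" "\<bar>r\<bar> \<le> 2" "0 \<le> \<alpha>"
  shows "f * (1 + \<alpha> * r) + s * (1 - \<alpha> * r)
    \<le> f + s + \<alpha> * ((trunc n f - trunc n s) * r) + 2 * \<alpha> * real n"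
proof -
  have "\<bar>(f - trunc n f) - (s - trunc n s)\<bar> \<le> real n"
    using assms(1,2) unfolding trunc_def by auto
  then have "\<bar>((f - trunc n f) - (s - trunc n s)) * r\<bar> \<le> real n * 2"
    unfolding abs_mult using assms(3) by (intro mult_mono) auto
  then have "\<alpha> * (((f - trunc n f) - (s - trunc n s)) * r) \<le> \<alpha> * (2 * real n)"
    using assms(4) by (intro mult_left_mono) auto
  then show ?thesis
    by (simp add: algebra_simps)
qed

locale mc_run =
  fixes V :: "'a set" and E :: "('a \<times> 'a) set" and b :: "'a \<Rightarrow> nat \<Rightarrow> real"
    and \<alpha> :: real and sel :: "nat \<Rightarrow> ('a \<times> 'a) \<Rightarrow> nat" and k :: nat
  assumes finite_V: "finite V" and finite_E: "finite E"
    and deg_pos: "\<And>v. v \<in> V \<Longrightarrow> 1 \<le> deg E v"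
    and b_bound: "\<And>v j. v \<in> V \<Longrightarrow> j < k \<Longrightarrow> \<bar>b v j\<bar> \<le> real (deg E v)"
    and alpha_pos: "0 < \<alpha>" and alpha_le: "\<alpha> \<le> 1/4"
begin

abbreviation wplus :: "nat \<Rightarrow> 'a \<Rightarrow> nat \<Rightarrow> real" where
  "wplus i \<equiv> fst (mc_w V E b \<alpha> sel i)"

abbreviation wminus :: "nat \<Rightarrow> 'a \<Rightarrow> nat \<Rightarrow> real" where
  "wminus i \<equiv> snd (mc_w V E b \<alpha> sel i)"

abbreviation phi :: "nat \<Rightarrow> 'a \<Rightarrow> nat \<Rightarrow> real" where
  "phi i \<equiv> mc_phiR V E b \<alpha> sel i"

abbreviation flow :: "nat \<Rightarrow> nat \<Rightarrow> ('a \<times> 'a) \<Rightarrow> real" where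
  "flow i \<equiv> mc_fR V E b \<alpha> sel i"

definition resid :: "nat \<Rightarrow> 'a \<Rightarrow> nat \<Rightarrow> real" where
  "resid i v j = (b v j - incB E (flow i j) v) / real (deg E v)"

definition potential :: "nat \<Rightarrow> real" where
  "potential i = (\<Sum>j<k. \<Sum>v\<in>V. wplus i v j + wminus i v j)"

lemma wplus_Suc: "wplus (Suc i) v j = wplus i v j * (1 + \<alpha> * resid i v j)"
  and wminus_Suc: "wminus (Suc i) v j = wminus i v j * (1 - \<alpha> * resid i v j)"
  by (simp_all add: Let_def resid_def mc_fR_def mc_phiR_def)

lemma wplus_eq_prod: "wplus i v j = (\<Prod>l<i. 1 + \<alpha> * resid l v j)"
  by (induction i) (simp_all add: wplus_Suc del: mc_w.simps(2))

lemma wminus_eq_prod: "wminus i v j = (\<Prod>l<i. 1 - \<alpha> * resid l v j)"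
  by (induction i) (simp_all add: wminus_Suc del: mc_w.simps(2))

lemma abs_resid_le:
  assumes "v \<in> V" "j < k"
  shows "\<bar>resid i v j\<bar> \<le> 2"
proof -
  have "\<bar>incB E (flow i j) v\<bar> \<le> real (deg E v)"
    using finite_E by (rule incB_abs_le) (simp add: mc_fR_def mc_flow_def abs_sgn_eq)
  then have "\<bar>b v j - incB E (flow i j) v\<bar> \<le> 2 * real (deg E v)"
    using b_bound[OF assms] by linarith
  moreover have "0 < real (deg E v)"
    using deg_pos[OF assms(1)] by simp
  ultimately show ?thesis
    unfolding resid_def abs_divide by (simp add: pos_divide_le_eq)
qed

lemma abs_alpha_resid_le:
  assumes "v \<in> V" "j < k"
  shows "\<bar>\<alpha> * resid i v j\<bar> \<le> 1/2"
proof -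
  have "\<bar>\<alpha> * resid i v j\<bar> \<le> 1/4 * 2"
    unfolding abs_mult using alpha_pos alpha_le abs_resid_le[OF assms]
    by (intro mult_mono) auto
  then show ?thesis
    by simp
qed

lemma weights_pos:
  assumes "v \<in> V" "j < k"
  shows "0 < wplus i v j" and "0 < wminus i v j"
proof -
  have "0 < 1 + \<alpha> * resid l v j" "0 < 1 - \<alpha> * resid l v j" for l
    using abs_alpha_resid_le[OF assms, of l] by (auto simp: abs_le_iff)
  then show "0 < wplus i v j" and "0 < wminus i v j"
    by (simp_all add: wplus_eq_prod wminus_eq_prod prod_pos)
qed

lemma ln_weights_ge:
  assumes "v \<in> V" "j < k"
  shows "\<alpha> * (\<Sum>l<i. resid l v j) - 4 * \<alpha>^2 * i \<le> ln (wplus i v j)"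
    and "- \<alpha> * (\<Sum>l<i. resid l v j) - 4 * \<alpha>^2 * i \<le> ln (wminus i v j)"
proof -
  have bound: "c * (\<Sum>l<i. resid l v j) - 4 * \<alpha>^2 * i \<le> ln (\<Prod>l<i. 1 + c * resid l v j)"
    if c: "\<bar>c\<bar> = \<alpha>" for c
  proof -
    have small: "\<bar>c * resid l v j\<bar> \<le> 1/2" for l
      using abs_alpha_resid_le[OF assms, of l] c alpha_pos by (simp add: abs_mult)
    moreover have "(c * resid l v j)^2 \<le> 4 * \<alpha>^2" for l
    proof -
      have "(resid l v j)^2 \<le> 2^2"
        using power_mono[OF abs_resid_le[OF assms, of l] abs_ge_zero, of 2] by simp
      moreover have "c^2 = \<alpha>^2"
        using c by (metis power2_abs)
      ultimately show ?thesis
        using mult_left_mono[of "(resid l v j)^2" 4 "\<alpha>^2"] by (simp add: power_mult_distrib mult.commute)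
    qed
    ultimately have "(\<Sum>l<i. c * resid l v j - 4 * \<alpha>^2) \<le> (\<Sum>l<i. c * resid l v j - (c * resid l v j)^2)"
      by (intro sum_mono) auto
    also have "\<dots> \<le> ln (\<Prod>l<i. 1 + c * resid l v j)"
      using small by (intro ln_prod_add_one_ge) auto
    finally show ?thesis
      by (simp add: sum_subtractf sum_distrib_left mult.commute)
  qed
  show "\<alpha> * (\<Sum>l<i. resid l v j) - 4 * \<alpha>^2 * i \<le> ln (wplus i v j)"
    using bound[of \<alpha>] alpha_pos by (simp add: wplus_eq_prod)
  show "- \<alpha> * (\<Sum>l<i. resid l v j) - 4 * \<alpha>^2 * i \<le> ln (wminus i v j)"
    using bound[of "- \<alpha>"] alpha_pos by (simp add: wminus_eq_prod)
qed

lemma weight_sum_step: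
  assumes "v \<in> V" "j < k"
  shows "wplus (Suc i) v j + wminus (Suc i) v j
    \<le> wplus i v j + wminus i v j + \<alpha> * (phi i v j * (b v j - incB E (flow i j) v))
      + 2 * \<alpha> * real (card V)"
proof -
  have "0 < real (deg E v)"
    using deg_pos[OF assms(1)] by simp
  then have "(trunc (card V) (wplus i v j) - trunc (card V) (wminus i v j)) * resid i v j
      = phi i v j * (b v j - incB E (flow i j) v)"
    by (simp add: mc_phiR_def mc_phi_def resid_def)
  moreover have "wplus i v j * (1 + \<alpha> * resid i v j) + wminus i v j * (1 - \<alpha> * resid i v j)
      \<le> wplus i v j + wminus i v j
        + \<alpha> * ((trunc (card V) (wplus i v j) - trunc (card V) (wminus i v j)) * resid i v j)
        + 2 * \<alpha> * real (card V)"
    using weights_pos[OF assms, of i] abs_resid_le[OF assms, of i] alpha_pos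
    by (intro trunc_update_le) auto
  ultimately show ?thesis
    unfolding wplus_Suc wminus_Suc by simp
qed

lemma potential_step:
  assumes "(\<Sum>j<k. \<Sum>v\<in>V. phi i v j * b v j) \<le> (\<Sum>j<k. \<Sum>v\<in>V. phi i v j * incB E (flow i j) v)"
  shows "potential (Suc i) \<le> potential i + 2 * \<alpha> * real k * real (card V)^2"
proof -
  have "potential (Suc i) \<le> (\<Sum>j<k. \<Sum>v\<in>V. wplus i v j + wminus i v j
      + \<alpha> * (phi i v j * (b v j - incB E (flow i j) v)) + 2 * \<alpha> * real (card V))"
    unfolding potential_def by (intro sum_mono weight_sum_step) auto
  also have "\<dots> = potential i + \<alpha> * ((\<Sum>j<k. \<Sum>v\<in>V. phi i v j * b v j)
      - (\<Sum>j<k. \<Sum>v\<in>V. phi i v j * incB E (flow i j) v)) + 2 * \<alpha> * real k * real (card V)^2"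
    by (simp add: potential_def sum.distrib sum_subtractf sum_distrib_left right_diff_distrib
        power2_eq_square mult_ac)
  also have "\<dots> \<le> potential i + 2 * \<alpha> * real k * real (card V)^2"
    using assms alpha_pos by (simp add: mult_nonneg_nonpos)
  finally show ?thesis .
qed

lemma potential_le:
  assumes "\<And>i. i < T \<Longrightarrow> (\<Sum>j<k. \<Sum>v\<in>V. phi i v j * b v j)
      \<le> (\<Sum>j<k. \<Sum>v\<in>V. phi i v j * incB E (flow i j) v)"
  shows "potential T \<le> 2 * real (card V) * real k + 2 * \<alpha> * real T * real k * real (card V)^2"
proof -
  have "potential T - potential 0 = (\<Sum>i<T. potential (Suc i) - potential i)"
    by (simp add: sum_lessThan_telescope)
  also have "\<dots> \<le> (\<Sum>i<T. 2 * \<alpha> * real k * real (card V)^2)"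
    using potential_step assms by (intro sum_mono) fastforce
  finally show ?thesis
    by (simp add: potential_def mult_ac)
qed

lemma weights_le_potential:
  assumes "v \<in> V" "j < k"
  shows "wplus i v j + wminus i v j \<le> potential i"
proof -
  have nonneg: "0 \<le> wplus i v' j' + wminus i v' j'" if "v' \<in> V" "j' < k" for v' j'
    using weights_pos[OF that, of i] by simp
  have "wplus i v j + wminus i v j \<le> (\<Sum>v'\<in>V. wplus i v' j + wminus i v' j)"
    using assms nonneg finite_V by (intro member_le_sum) auto
  also have "\<dots> \<le> potential i"
    unfolding potential_def using assms nonneg by (intro member_le_sum sum_nonneg) auto
  finally show ?thesis .
qed

lemma abs_sum_resid_le:
  assumes "v \<in> V" "j < k" and "potential T \<le> exp (\<alpha>^2 * T)"
  shows "\<bar>\<Sum>i<T. resid i v j\<bar> \<le> 5 * \<alpha> * T"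
proof -
  have "wplus T v j + wminus T v j \<le> exp (\<alpha>^2 * T)"
    using weights_le_potential[OF assms(1,2)] assms(3) by (rule order_trans)
  then have "wplus T v j \<le> exp (\<alpha>^2 * T)" and "wminus T v j \<le> exp (\<alpha>^2 * T)"
    using weights_pos[OF assms(1,2), of T] by linarith+
  then have "ln (wplus T v j) \<le> \<alpha>^2 * T" and "ln (wminus T v j) \<le> \<alpha>^2 * T"
    using weights_pos[OF assms(1,2)] ln_le_cancel_iff[of _ "exp (\<alpha>^2 * T)"] by auto
  with ln_weights_ge[OF assms(1,2), of T]
  have "\<alpha> * (\<Sum>i<T. resid i v j) \<le> \<alpha> * (5 * \<alpha> * T)"
    and "\<alpha> * - (\<Sum>i<T. resid i v j) \<le> \<alpha> * (5 * \<alpha> * T)"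
    by (simp_all add: power2_eq_square algebra_simps)
  then have "(\<Sum>i<T. resid i v j) \<le> 5 * \<alpha> * T" and "- (\<Sum>i<T. resid i v j) \<le> 5 * \<alpha> * T"
    by (simp_all only: mult_le_cancel_left_pos[OF alpha_pos])
  then show ?thesis
    by linarith
qed

lemma avg_flow_deviation:
  assumes "v \<in> V" "0 < T"
  shows "b v j - incB E (\<lambda>e. 1 / real T * (\<Sum>i<T. flow i j e)) v
    = real (deg E v) / real T * (\<Sum>i<T. resid i v j)"
proof -
  have "0 < real (deg E v)"
    using deg_pos[OF assms(1)] by simp
  then show ?thesis
    using assms(2) unfolding incB_scaled_sum
    by (simp add: resid_def sum_divide_distrib[symmetric] sum_subtractf field_simps)
qed

end

theorem lemma2p12:
  fixes V :: "'a set" and E :: "('a \<times> 'a) set" and b :: "'a \<Rightarrow> nat \<Rightarrow> real"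
    and k T :: nat and \<alpha> :: real and sel :: "nat \<Rightarrow> ('a \<times> 'a) \<Rightarrow> nat"
  assumes finV: "finite V" and n3: "card V \<ge> 3"
    and EV: "E \<subseteq> V \<times> V"
    and simple: "\<forall>(u, w) \<in> E. u \<noteq> w \<and> (w, u) \<notin> E"
    and degpos: "\<forall>v\<in>V. deg E v \<ge> 1"
    and k1: "k \<ge> 1"
    and bbound: "\<forall>v\<in>V. \<forall>j<k. \<bar>b v j\<bar> \<le> real (deg E v)"
    and alpha: "0 < \<alpha>" "\<alpha> \<le> 1/4"
    and T1: "T \<ge> 1"
    and Tbig: "\<alpha>^2 * real T \<ge> ln (2 * real (card V) * real k + 5 * real T * real k * real (card V)^2)"
    and sel_ok: "\<forall>i<T. \<forall>e\<in>E. sel i e < k \<and>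
        (\<forall>j<k. \<bar>mc_phiR V E b \<alpha> sel i (fst e) j - mc_phiR V E b \<alpha> sel i (snd e) j\<bar>
           \<le> \<bar>mc_phiR V E b \<alpha> sel i (fst e) (sel i e) - mc_phiR V E b \<alpha> sel i (snd e) (sel i e)\<bar>)"
    and no_term: "\<forall>i<T. (\<Sum>j<k. \<Sum>v\<in>V. mc_phiR V E b \<alpha> sel i v j * b v j)
        \<le> (\<Sum>j<k. \<Sum>v\<in>V. mc_phiR V E b \<alpha> sel i v j * incB E (mc_fR V E b \<alpha> sel i j) v)"
  shows "\<forall>v\<in>V. \<forall>j<k.
     \<bar>b v j - incB E (\<lambda>e. (1 / real T) * (\<Sum>i<T. mc_fR V E b \<alpha> sel i j e)) v\<bar>
       \<le> 5 * \<alpha> * real (deg E v)"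
proof -
  have "finite E"
    using EV finV by (meson finite_SigmaI finite_subset)
  interpret mc_run V E b \<alpha> sel k
    using finV \<open>finite E\<close> degpos bbound alpha by unfold_locales auto
  define M where "M = 2 * real (card V) * real k + 5 * real T * real k * real (card V)^2"
  have "0 < M"
    using n3 k1 unfolding M_def by (simp add: add_pos_nonneg)
  have "potential T \<le> 2 * real (card V) * real k + 2 * \<alpha> * real T * real k * real (card V)^2"
    using no_term by (intro potential_le) auto
  also have "\<dots> \<le> M"
    unfolding M_def using alpha by (intro add_left_mono mult_right_mono) auto
  also have "\<dots> \<le> exp (\<alpha>^2 * T)"
    using Tbig \<open>0 < M\<close> unfolding M_def[symmetric] by (metis exp_le_cancel_iff exp_ln)
  finally have "potential T \<le> exp (\<alpha>^2 * T)" .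
  show ?thesis
  proof (intro ballI allI impI)
    fix v j
    assume "v \<in> V" "j < k"
    have "\<bar>b v j - incB E (\<lambda>e. 1 / real T * (\<Sum>i<T. flow i j e)) v\<bar>
        = real (deg E v) / real T * \<bar>\<Sum>i<T. resid i v j\<bar>"
      using avg_flow_deviation[OF \<open>v \<in> V\<close>] T1 by (simp add: abs_mult)
    also have "\<dots> \<le> real (deg E v) / real T * (5 * \<alpha> * T)"
      using abs_sum_resid_le[OF \<open>v \<in> V\<close> \<open>j < k\<close> \<open>potential T \<le> exp (\<alpha>^2 * T)\<close>]
      by (intro mult_left_mono) auto
    also have "\<dots> = 5 * \<alpha> * real (deg E v)"
      using T1 by simp
    finally show "\<bar>b v j - incB E (\<lambda>e. 1 / real T * (\<Sum>i<T. flow i j e)) v\<bar>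
        \<le> 5 * \<alpha> * real (deg E v)" .
  qed
qed

end
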